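(* Let $S$ be an intra-regular $\Gamma$-AG$^{**}$-groupoid and let $B$ be a $\Gamma$-bi-ideal (or a $\Gamma$-generalized bi-ideal) of $S$. Then $(B\Gamma S)\Gamma B=B\cap S=B$.
   Context: Let $S$ and $\Gamma$ be nonempty sets with a map $S\times\Gamma\times S\to S$, $(x,\gamma,y)\mapsto x\gamma y$. $S$ is a $\Gamma$-AG-groupoid if $(x\gamma y)\delta z=(z\gamma y)\delta x$ for all $x,y,z\in S$, $\gamma,\delta\in\Gamma$; it is a $\Gamma$-AG$^{**}$-groupoid if moreover $a\alpha(b\beta c)=b\alpha(a\beta c)$ for all $a,b,c\in S$, $\alpha,\beta\in\Gamma$. For subsets $A,B\subseteq S$, $A\Gamma B=\{a\gamma b: a\in A,\gamma\in\Gamma,b\in B\}$. $S$ is intra-regular if for every $a\in S$ there exist $x,y\in S$ and $\beta,\gamma,\delta\in\Gamma$ with $a=(x\beta(a\delta a))\gamma y$. A nonempty subset $B\subseteq S$ is a $\Gamma$-generalized bi-ideal if $(B\Gamma S)\Gamma B\subseteq B$, and a $\Gamma$-bi-ideal if in addition $B\Gamma B\subseteq B$. *)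

theory Defs
  imports Main
begin

definition gamma_closed :: "'a set \<Rightarrow> 'g set \<Rightarrow> ('a \<Rightarrow> 'g \<Rightarrow> 'a \<Rightarrow> 'a) \<Rightarrow> bool" where
  "gamma_closed S G m \<longleftrightarrow> S \<noteq> {} \<and> G \<noteq> {} \<and>
     (\<forall>x\<in>S. \<forall>g\<in>G. \<forall>y\<in>S. m x g y \<in> S)"

definition gamma_AG_groupoid :: "'a set \<Rightarrow> 'g set \<Rightarrow> ('a \<Rightarrow> 'g \<Rightarrow> 'a \<Rightarrow> 'a) \<Rightarrow> bool" where
  "gamma_AG_groupoid S G m \<longleftrightarrow> gamma_closed S G m \<and>
     (\<forall>x\<in>S. \<forall>y\<in>S. \<forall>z\<in>S. \<forall>g\<in>G. \<forall>d\<in>G. m (m x g y) d z = m (m z g y) d x)"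

definition gamma_AG2_groupoid :: "'a set \<Rightarrow> 'g set \<Rightarrow> ('a \<Rightarrow> 'g \<Rightarrow> 'a \<Rightarrow> 'a) \<Rightarrow> bool" where
  "gamma_AG2_groupoid S G m \<longleftrightarrow> gamma_AG_groupoid S G m \<and>
     (\<forall>a\<in>S. \<forall>b\<in>S. \<forall>c\<in>S. \<forall>al\<in>G. \<forall>be\<in>G. m a al (m b be c) = m b al (m a be c))"

definition gset_mult :: "('a \<Rightarrow> 'g \<Rightarrow> 'a \<Rightarrow> 'a) \<Rightarrow> 'a set \<Rightarrow> 'g set \<Rightarrow> 'a set \<Rightarrow> 'a set" where
  "gset_mult m A G B = {m a g b | a g b. a \<in> A \<and> g \<in> G \<and> b \<in> B}"

definition intra_regular :: "'a set \<Rightarrow> 'g set \<Rightarrow> ('a \<Rightarrow> 'g \<Rightarrow> 'a \<Rightarrow> 'a) \<Rightarrow> bool" where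
  "intra_regular S G m \<longleftrightarrow> (\<forall>a\<in>S. \<exists>x\<in>S. \<exists>y\<in>S. \<exists>be\<in>G. \<exists>ga\<in>G. \<exists>de\<in>G.
      a = m (m x be (m a de a)) ga y)"

definition gamma_gen_bi_ideal :: "'a set \<Rightarrow> 'g set \<Rightarrow> ('a \<Rightarrow> 'g \<Rightarrow> 'a \<Rightarrow> 'a) \<Rightarrow> 'a set \<Rightarrow> bool" where
  "gamma_gen_bi_ideal S G m B \<longleftrightarrow> B \<noteq> {} \<and> B \<subseteq> S \<and>
     gset_mult m (gset_mult m B G S) G B \<subseteq> B"

definition gamma_bi_ideal :: "'a set \<Rightarrow> 'g set \<Rightarrow> ('a \<Rightarrow> 'g \<Rightarrow> 'a \<Rightarrow> 'a) \<Rightarrow> 'a set \<Rightarrow> bool" where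
  "gamma_bi_ideal S G m B \<longleftrightarrow> gamma_gen_bi_ideal S G m B \<and> gset_mult m B G B \<subseteq> B"

end

theory Submission
  imports Defs
begin

(* In an intra-regular Gamma-AG**-groupoid every element a can be
   rewritten, using only the left invertive law (x g y) d z = (z g y) d x and
   the permutation law a g (b d c) = b g (a d c), into the shape
   a = (a b s) g a  with  s in S  (b, g in Gamma); i.e. S is regular.
   For a subset B of S this gives at once B \<subseteq> (B Gamma S) Gamma B, and a
   generalized bi-ideal satisfies the reverse inclusion by definition. *)

lemma AG2_closed:
  assumes "gamma_AG2_groupoid S G m" "x \<in> S" "g \<in> G" "y \<in> S"
  shows "m x g y \<in> S"
  using assms unfolding gamma_AG2_groupoid_def gamma_AG_groupoid_def gamma_closed_def by blast

lemma AG2_left_invertive: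
  assumes "gamma_AG2_groupoid S G m" "x \<in> S" "y \<in> S" "z \<in> S" "g \<in> G" "d \<in> G"
  shows "m (m x g y) d z = m (m z g y) d x"
  using assms unfolding gamma_AG2_groupoid_def gamma_AG_groupoid_def by blast

lemma AG2_permute:
  assumes "gamma_AG2_groupoid S G m" "a \<in> S" "b \<in> S" "c \<in> S" "g \<in> G" "d \<in> G"
  shows "m a g (m b d c) = m b g (m a d c)"
  using assms unfolding gamma_AG2_groupoid_def by blast

definition gamma_regular_elem :: "'a set \<Rightarrow> 'g set \<Rightarrow> ('a \<Rightarrow> 'g \<Rightarrow> 'a \<Rightarrow> 'a) \<Rightarrow> 'a \<Rightarrow> bool" where
  "gamma_regular_elem S G m a \<longleftrightarrow> (\<exists>s\<in>S. \<exists>b\<in>G. \<exists>g\<in>G. a = m (m a b s) g a)"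

lemma intra_regular_first_form:
  assumes AG2: "gamma_AG2_groupoid S G m"
    and S: "x \<in> S" "y \<in> S" "a \<in> S" and G: "b \<in> G" "g \<in> G" "d \<in> G"
    and a_eq: "a = m (m x b (m a d a)) g y"
  shows "a = m (m (m x b (m a d a)) b (m y d (m x g y))) g a"
proof -
  let ?P = "m x b (m a d a)" and ?R = "m x g y"
  have P: "?P \<in> S" and R: "?R \<in> S"
    using S G by (auto intro!: AG2_closed[OF AG2])
  have xda: "m x d a \<in> S" using S G by (auto intro!: AG2_closed[OF AG2])
  have "a = m (m a b (m x d a)) g y"
    using a_eq AG2_permute[OF AG2 S(1) S(3) S(3) G(1) G(3)] by simp
  also have "\<dots> = m (m y b (m x d a)) g a"
    using AG2_left_invertive[OF AG2 S(3) xda S(2) G(1) G(2)] .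
  also have "m x d a = m ?P d ?R"
    using a_eq AG2_permute[OF AG2 S(1) P S(2) G(3) G(2)] by simp
  also have "m y b (m ?P d ?R) = m ?P b (m y d ?R)"
    using AG2_permute[OF AG2 S(2) P R G(1) G(3)] .
  finally show ?thesis .
qed

lemma intra_regular_second_form:
  assumes AG2: "gamma_AG2_groupoid S G m"
    and S: "x \<in> S" "y \<in> S" "a \<in> S" and G: "b \<in> G" "g \<in> G" "d \<in> G"
    and a_eq: "a = m (m x b (m a d a)) g y"
  shows "\<exists>w\<in>S. m (m x b (m a d a)) b (m y d (m x g y)) = m a b w"
proof -
  let ?P = "m x b (m a d a)" and ?R = "m x g y" and ?Q = "m a g y"
  have P: "?P \<in> S" and R: "?R \<in> S" and Q: "?Q \<in> S"
    and xdP: "m x d ?P \<in> S" and ydR: "m y d ?R \<in> S"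
    using S G by (auto intro!: AG2_closed[OF AG2])
  define W where "W = m (m y d ?R) b (m x d ?P)"
  have W: "W \<in> S" unfolding W_def using ydR xdP G by (auto intro!: AG2_closed[OF AG2])
  have "?P = m x b (m (m ?P g y) d a)" using a_eq by simp
  also have "m (m ?P g y) d a = m ?Q d ?P"
    using AG2_left_invertive[OF AG2 P S(2) S(3) G(2) G(3)] .
  also have "m x b (m ?Q d ?P) = m ?Q b (m x d ?P)"
    using AG2_permute[OF AG2 S(1) Q P G(1) G(3)] .
  finally have P_eq: "?P = m ?Q b (m x d ?P)" .
  have "m ?P b (m y d ?R) = m (m ?Q b (m x d ?P)) b (m y d ?R)"
    using P_eq by simp
  also have "\<dots> = m W b ?Q"
    unfolding W_def using AG2_left_invertive[OF AG2 Q xdP ydR G(1) G(1)] .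
  also have "\<dots> = m a b (m W g y)"
    using AG2_permute[OF AG2 W S(3) S(2) G(1) G(2)] .
  finally show ?thesis using W S G by (auto intro!: AG2_closed[OF AG2])
qed

lemma intra_regular_AG2_regular:
  assumes AG2: "gamma_AG2_groupoid S G m" and IR: "intra_regular S G m" and a: "a \<in> S"
  shows "gamma_regular_elem S G m a"
proof -
  obtain x y b g d where S: "x \<in> S" "y \<in> S" and G: "b \<in> G" "g \<in> G" "d \<in> G"
    and a_eq: "a = m (m x b (m a d a)) g y"
    using IR a unfolding intra_regular_def by blast
  obtain w where "w \<in> S" and "m (m x b (m a d a)) b (m y d (m x g y)) = m a b w"
    using intra_regular_second_form[OF AG2 S a G a_eq] by blast
  then show ?thesis
    using intra_regular_first_form[OF AG2 S a G a_eq] G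
    unfolding gamma_regular_elem_def by metis
qed

lemma regular_subset_gen_product:
  assumes "\<And>a. a \<in> B \<Longrightarrow> gamma_regular_elem S G m a"
  shows "B \<subseteq> gset_mult m (gset_mult m B G S) G B"
proof
  fix a assume aB: "a \<in> B"
  then obtain s b g where "s \<in> S" "b \<in> G" "g \<in> G" "a = m (m a b s) g a"
    using assms unfolding gamma_regular_elem_def by blast
  then show "a \<in> gset_mult m (gset_mult m B G S) G B"
    unfolding gset_mult_def using aB by blast
qed

lemma regular_gen_bi_ideal_eq:
  assumes "gamma_gen_bi_ideal S G m B" and "\<And>a. a \<in> B \<Longrightarrow> gamma_regular_elem S G m a"
  shows "gset_mult m (gset_mult m B G S) G B = B"
  using assms regular_subset_gen_product unfolding gamma_gen_bi_ideal_def by blast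

theorem mainTheorem2:
  fixes S :: "'a set" and G :: "'g set" and m :: "'a \<Rightarrow> 'g \<Rightarrow> 'a \<Rightarrow> 'a" and B :: "'a set"
  assumes "gamma_AG2_groupoid S G m"
    and "intra_regular S G m"
    and "gamma_bi_ideal S G m B \<or> gamma_gen_bi_ideal S G m B"
  shows "gset_mult m (gset_mult m B G S) G B = B \<inter> S \<and> B \<inter> S = B"
proof -
  have gen: "gamma_gen_bi_ideal S G m B"
    using assms(3) unfolding gamma_bi_ideal_def by blast
  then have BS: "B \<subseteq> S" unfolding gamma_gen_bi_ideal_def by blast
  have "gset_mult m (gset_mult m B G S) G B = B"
    using regular_gen_bi_ideal_eq[OF gen] intra_regular_AG2_regular[OF assms(1,2)] BS by blast
  then show ?thesis using BS by blast
qed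

end
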